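(* If $(\Phi,\Phi_f,D)$ is a domain-free s-compact information algebra, then its associated labeled information algebra $(\Psi,D)$ is a labeled s-compact information algebra (with $\Gamma_x=\{(\psi,x):\psi\in\Phi_f,\ \psi=\psi^{\Rightarrow x}\}$).
   Context: A domain-free information algebra $(\Phi,D)$ consists of a set $\Phi$, a lattice $D$, a combination $\otimes$ and a focusing $(\psi,x)\mapsto\psi^{\Rightarrow x}$ ($x\in D$) such that: $\otimes$ is associative, commutative with neutral element $e$; $(\psi^{\Rightarrow y})^{\Rightarrow x}=\psi^{\Rightarrow x\wedge y}$; $(\phi^{\Rightarrow x}\otimes\psi)^{\Rightarrow x}=\phi^{\Rightarrow x}\otimes\psi^{\Rightarrow x}$; every $\psi$ has some $x$ with $\psi^{\Rightarrow x}=\psi$; $\psi\otimes\psi^{\Rightarrow x}=\psi$. In both domain-free and labeled algebras, $\psi\le\phi$ iff $\psi\otimes\phi=\phi$; suprema refer to this order. $a\ll b$ means: for every directed $X$ with $b\le\vee X$ there is $c\in X$ with $a\le c$; $\Phi_f=\{\phi\in\Phi:\phi\ll\phi\}$. A domain-free $(\Phi,D)$ with $D$ having a top element is s-compact if there exists $\Gamma\subseteq\Phi$, closed under combination and containing $e$, such that every directed subset of $\Gamma$ has a supremum in $\Phi$, $\phi^{\Rightarrow x}=\vee\{\psi\in\Gamma:\psi=\psi^{\Rightarrow x}\ll\phi\}$ for all $\phi\in\Phi$, $x\in D$, and for every directed $X\subseteq\Gamma$ and $\phi\in\Gamma$ with $\phi\le\vee X$ there is $\psi\in X$ with $\phi\le\psi$;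 then necessarily $\Gamma=\Phi_f$, and one writes $(\Phi,\Phi_f,D)$. The associated labeled information algebra is $(\Psi,D)$ with $\Psi=\{(\phi,x)\in\Phi\times D:\phi=\phi^{\Rightarrow x}\}$, labeling $d(\phi,x)=x$, combination $(\phi,x)\otimes(\psi,y)=(\phi\otimes\psi,x\vee y)$, marginalization $(\phi,x)^{\downarrow y}=(\phi^{\Rightarrow y},y)$ for $y\le x$; neutral elements $e_x=(e,x)$. For a labeled information algebra, $\Phi_x$ denotes the elements with label $x$ and $\ll_x$ the way-below relation of $(\Phi_x,\le)$. A labeled s-compact information algebra is $(\Phi,\{\Gamma_x\}_{x\in D},D)$ with $D$ having a top element $\top$ and, for each $x$, $\Gamma_x\subseteq\Phi_x$ closed under combination, containing $e_x$, such that: (convergency) every directed $X\subseteq\Gamma_x$ has a supremum $\vee X\in\Phi_x$; (strong density) for all $\phi\in\Phi_x$, $\phi=\vee\{\psi^{\downarrow x}\in\Gamma_x:\ \psi\in\Phi,\ x\le d(\psi),\ \psi^{\downarrow x}\otimes e_\top\in\Gamma_\top,\ \psi^{\downarrow x}\ll_x\phi\}$; (compactness) for every directed $X\subseteq\Gamma_x$ and $\phi\in\Gamma_x$ with $\phi\le\vee X$ there is $\psi\in X$ with $\phi\le\psi$. *)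

theory Defs
  imports Main
begin

definition directed_in :: "('a \<Rightarrow> 'a \<Rightarrow> bool) \<Rightarrow> 'a set \<Rightarrow> 'a set \<Rightarrow> bool" where
  "directed_in le C X \<longleftrightarrow> X \<subseteq> C \<and> X \<noteq> {} \<and>
     (\<forall>a\<in>X. \<forall>b\<in>X. \<exists>c\<in>X. le a c \<and> le b c)"

definition is_sup_in :: "('a \<Rightarrow> 'a \<Rightarrow> bool) \<Rightarrow> 'a set \<Rightarrow> 'a set \<Rightarrow> 'a \<Rightarrow> bool" where
  "is_sup_in le C X s \<longleftrightarrow> s \<in> C \<and> (\<forall>a\<in>X. le a s) \<and>
     (\<forall>u\<in>C. (\<forall>a\<in>X. le a u) \<longrightarrow> le s u)"

definition way_below_in :: "('a \<Rightarrow> 'a \<Rightarrow> bool) \<Rightarrow> 'a set \<Rightarrow> 'a \<Rightarrow> 'a \<Rightarrow> bool" where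
  "way_below_in le C a b \<longleftrightarrow>
     (\<forall>X s. directed_in le C X \<longrightarrow> is_sup_in le C X s \<longrightarrow> le b s \<longrightarrow> (\<exists>c\<in>X. le a c))"

text \<open>The carrier \<open>\<Phi>\<close> is the whole type \<open>'a\<close>, the lattice \<open>D\<close> is the type \<open>'d\<close>.\<close>
definition df_info_algebra ::
  "('a \<Rightarrow> 'a \<Rightarrow> 'a) \<Rightarrow> 'a \<Rightarrow> ('a \<Rightarrow> 'd::lattice \<Rightarrow> 'a) \<Rightarrow> bool" where
  "df_info_algebra comb e foc \<longleftrightarrow>
     (\<forall>a b c. comb (comb a b) c = comb a (comb b c)) \<and>
     (\<forall>a b. comb a b = comb b a) \<and>
     (\<forall>a. comb e a = a) \<and>
     (\<forall>\<psi> x y. foc (foc \<psi> y) x = foc \<psi> (inf x y)) \<and>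
     (\<forall>\<phi> \<psi> x. foc (comb (foc \<phi> x) \<psi>) x = comb (foc \<phi> x) (foc \<psi> x)) \<and>
     (\<forall>\<psi>. \<exists>x. foc \<psi> x = \<psi>) \<and>
     (\<forall>\<psi> x. comb \<psi> (foc \<psi> x) = \<psi>)"

definition df_le :: "('a \<Rightarrow> 'a \<Rightarrow> 'a) \<Rightarrow> 'a \<Rightarrow> 'a \<Rightarrow> bool" where
  "df_le comb \<psi> \<phi> \<longleftrightarrow> comb \<psi> \<phi> = \<phi>"

definition df_finite :: "('a \<Rightarrow> 'a \<Rightarrow> 'a) \<Rightarrow> 'a set" where
  "df_finite comb = {\<phi>. way_below_in (df_le comb) UNIV \<phi> \<phi>}"

definition df_s_compact ::
  "('a \<Rightarrow> 'a \<Rightarrow> 'a) \<Rightarrow> 'a \<Rightarrow> ('a \<Rightarrow> 'd::{lattice,order_top} \<Rightarrow> 'a) \<Rightarrow> 'a set \<Rightarrow> bool" where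
  "df_s_compact comb e foc \<Gamma> \<longleftrightarrow>
     (\<forall>a\<in>\<Gamma>. \<forall>b\<in>\<Gamma>. comb a b \<in> \<Gamma>) \<and> e \<in> \<Gamma> \<and>
     (\<forall>X. directed_in (df_le comb) \<Gamma> X \<longrightarrow> (\<exists>s. is_sup_in (df_le comb) UNIV X s)) \<and>
     (\<forall>\<phi> x. is_sup_in (df_le comb) UNIV
        {\<psi>\<in>\<Gamma>. \<psi> = foc \<psi> x \<and> way_below_in (df_le comb) UNIV \<psi> \<phi>} (foc \<phi> x)) \<and>
     (\<forall>X \<phi> s. directed_in (df_le comb) \<Gamma> X \<longrightarrow> \<phi> \<in> \<Gamma> \<longrightarrow>
        is_sup_in (df_le comb) UNIV X s \<longrightarrow> df_le comb \<phi> s \<longrightarrow> (\<exists>\<psi>\<in>X. df_le comb \<phi> \<psi>))"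

definition lab_carrier :: "('a \<Rightarrow> 'd \<Rightarrow> 'a) \<Rightarrow> ('a \<times> 'd) set" where
  "lab_carrier foc = {(\<phi>, x). \<phi> = foc \<phi> x}"

definition lab_label :: "'a \<times> 'd \<Rightarrow> 'd" where
  "lab_label p = snd p"

definition lab_comb :: "('a \<Rightarrow> 'a \<Rightarrow> 'a) \<Rightarrow> 'a \<times> 'd::lattice \<Rightarrow> 'a \<times> 'd \<Rightarrow> 'a \<times> 'd" where
  "lab_comb comb p q = (comb (fst p) (fst q), sup (snd p) (snd q))"

text \<open>Marginalization \<open>(\<phi>,x)\<^sup>\<down>y = (\<phi>\<^sup>\<Rightarrow>y, y)\<close>; only used for \<open>y \<le> x\<close>.\<close>
definition lab_marg :: "('a \<Rightarrow> 'd \<Rightarrow> 'a) \<Rightarrow> 'a \<times> 'd \<Rightarrow> 'd \<Rightarrow> 'a \<times> 'd" where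
  "lab_marg foc p y = (foc (fst p) y, y)"

definition lab_neutral :: "'a \<Rightarrow> 'd \<Rightarrow> 'a \<times> 'd" where
  "lab_neutral e x = (e, x)"

definition lab_le :: "('b \<Rightarrow> 'b \<Rightarrow> 'b) \<Rightarrow> 'b \<Rightarrow> 'b \<Rightarrow> bool" where
  "lab_le cb \<psi> \<phi> \<longleftrightarrow> cb \<psi> \<phi> = \<phi>"

definition Phi_at :: "'b set \<Rightarrow> ('b \<Rightarrow> 'd) \<Rightarrow> 'd \<Rightarrow> 'b set" where
  "Phi_at Psi d x = {\<phi>\<in>Psi. d \<phi> = x}"

definition lab_s_compact ::
  "'b set \<Rightarrow> ('b \<Rightarrow> 'd::{lattice,order_top}) \<Rightarrow> ('b \<Rightarrow> 'b \<Rightarrow> 'b) \<Rightarrow> ('b \<Rightarrow> 'd \<Rightarrow> 'b)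
    \<Rightarrow> ('d \<Rightarrow> 'b) \<Rightarrow> ('d \<Rightarrow> 'b set) \<Rightarrow> bool" where
  "lab_s_compact Psi d cb mg ne \<Gamma> \<longleftrightarrow>
     (\<forall>x. \<Gamma> x \<subseteq> Phi_at Psi d x \<and> ne x \<in> \<Gamma> x \<and>
          (\<forall>a\<in>\<Gamma> x. \<forall>b\<in>\<Gamma> x. cb a b \<in> \<Gamma> x)) \<and>
     \<comment> \<open>convergency\<close>
     (\<forall>x X. directed_in (lab_le cb) (\<Gamma> x) X \<longrightarrow>
        (\<exists>s. is_sup_in (lab_le cb) (Phi_at Psi d x) X s)) \<and>
     \<comment> \<open>strong density\<close>
     (\<forall>x. \<forall>\<phi>\<in>Phi_at Psi d x. is_sup_in (lab_le cb) (Phi_at Psi d x)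
        {mg \<psi> x | \<psi>. \<psi> \<in> Psi \<and> x \<le> d \<psi> \<and> mg \<psi> x \<in> \<Gamma> x \<and>
            cb (mg \<psi> x) (ne top) \<in> \<Gamma> top \<and>
            way_below_in (lab_le cb) (Phi_at Psi d x) (mg \<psi> x) \<phi>} \<phi>) \<and>
     \<comment> \<open>compactness\<close>
     (\<forall>x X \<phi> s. directed_in (lab_le cb) (\<Gamma> x) X \<longrightarrow> \<phi> \<in> \<Gamma> x \<longrightarrow>
        is_sup_in (lab_le cb) (Phi_at Psi d x) X s \<longrightarrow> lab_le cb \<phi> s \<longrightarrow>
        (\<exists>\<psi>\<in>X. lab_le cb \<phi> \<psi>))"

end

theory Submission
  imports Defs
begin

text \<open>On each label \<open>x\<close> the associated labeled algebra is order-isomorphic to the set of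
  fixpoints of focusing on \<open>x\<close>. Focusing is monotone and deflationary, so this set is closed
  under the suprema of \<open>\<Phi>\<close> that exist; hence directed suprema, the way-below relation and
  compactness transfer between \<open>\<Phi>\<close> and \<open>\<Phi>\<^sub>x\<close>. For strong density, the finite elements
  supported by \<open>x\<close> are their own marginals, and their vacuous extensions to \<open>\<top>\<close> stay finite
  because \<open>\<psi> = \<psi>\<^sup>\<Rightarrow>\<^sup>x\<close> implies \<open>\<psi> = \<psi>\<^sup>\<Rightarrow>\<^sup>\<top>\<close>.\<close>

locale df_information_algebra =
  fixes comb :: "'a \<Rightarrow> 'a \<Rightarrow> 'a" and e :: 'a
    and foc :: "'a \<Rightarrow> 'd::lattice \<Rightarrow> 'a"
  assumes df_info_algebra: "df_info_algebra comb e foc"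
begin

abbreviation le :: "'a \<Rightarrow> 'a \<Rightarrow> bool" where
  "le \<equiv> df_le comb"

abbreviation lab_leq :: "'a \<times> 'd \<Rightarrow> 'a \<times> 'd \<Rightarrow> bool" where
  "lab_leq \<equiv> lab_le (lab_comb comb)"

abbreviation Phi :: "'d \<Rightarrow> ('a \<times> 'd) set" where
  "Phi x \<equiv> Phi_at (lab_carrier foc) lab_label x"

lemma comb_assoc: "comb (comb a b) c = comb a (comb b c)"
  using df_info_algebra unfolding df_info_algebra_def by blast

lemma comb_commute: "comb a b = comb b a"
  using df_info_algebra unfolding df_info_algebra_def by blast

lemma comb_neutral: "comb e a = a"
  using df_info_algebra unfolding df_info_algebra_def by blast

lemma foc_foc: "foc (foc \<psi> y) x = foc \<psi> (inf x y)"
  using df_info_algebra unfolding df_info_algebra_def by blast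

lemma foc_comb_foc: "foc (comb (foc \<phi> x) \<psi>) x = comb (foc \<phi> x) (foc \<psi> x)"
  using df_info_algebra unfolding df_info_algebra_def by blast

lemma ex_support: "\<exists>x. foc \<psi> x = \<psi>"
  using df_info_algebra unfolding df_info_algebra_def by blast

lemma comb_foc_absorb: "comb \<psi> (foc \<psi> x) = \<psi>"
  using df_info_algebra unfolding df_info_algebra_def by blast

lemma comb_idem: "comb a a = a"
  using ex_support[of a] comb_foc_absorb[of a] by metis

lemma le_refl: "le a a"
  by (simp add: df_le_def comb_idem)

lemma le_trans:
  assumes "le a b" and "le b c"
  shows "le a c"
proof -
  have "comb a c = comb a (comb b c)"
    using assms(2) by (simp add: df_le_def)
  also have "\<dots> = comb (comb a b) c"
    by (simp only: comb_assoc)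
  finally show ?thesis
    using assms by (simp add: df_le_def)
qed

lemma le_antisym: "le a b \<Longrightarrow> le b a \<Longrightarrow> a = b"
  unfolding df_le_def using comb_commute[of a b] by simp

lemma foc_le: "le (foc a x) a"
  unfolding df_le_def using comb_foc_absorb[of a x] comb_commute[of "foc a x" a] by simp

lemma foc_mono:
  assumes "le a b"
  shows "le (foc a x) (foc b x)"
proof -
  have b: "comb a b = b"
    using assms by (simp add: df_le_def)
  have "comb (foc a x) b = comb (comb a (foc a x)) b"
    using b by (metis comb_assoc comb_commute)
  then have "comb (foc a x) b = b"
    using b comb_foc_absorb by simp
  then have "foc b x = comb (foc a x) (foc b x)"
    using foc_comb_foc[of a x b] by simp
  then show ?thesis
    by (simp add: df_le_def)
qed

lemma foc_neutral: "foc e x = e"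
  using comb_foc_absorb[of e x] comb_neutral[of "foc e x"] by simp

lemma foc_comb_supported:
  assumes "foc a x = a" and "foc b x = b"
  shows "foc (comb a b) x = comb a b"
  using foc_comb_foc[of a x b] assms by simp

lemma lab_le_iff: "lab_leq p q \<longleftrightarrow> le (fst p) (fst q) \<and> snd p \<le> snd q"
  unfolding lab_le_def lab_comb_def df_le_def by (auto simp: prod_eq_iff le_iff_sup)

lemma Phi_at_iff: "p \<in> Phi x \<longleftrightarrow> snd p = x \<and> foc (fst p) x = fst p"
  by (cases p) (auto simp: Phi_at_def lab_carrier_def lab_label_def)

lemma directed_fst:
  assumes "directed_in lab_leq C X"
  shows "directed_in le UNIV (fst ` X)"
  using assms unfolding directed_in_def lab_le_iff by fastforce

lemma is_sup_fst:
  assumes X: "X \<subseteq> Phi x" and S: "is_sup_in lab_leq (Phi x) X s"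
  shows "is_sup_in le UNIV (fst ` X) (fst s)"
proof -
  have least: "lab_leq s u" if "u \<in> Phi x" "\<forall>a\<in>X. lab_leq a u" for u
    using S that unfolding is_sup_in_def by blast
  have "le (fst s) u" if u: "\<forall>a\<in>fst ` X. le a u" for u
  proof -
    have "lab_leq a (foc u x, x)" if "a \<in> X" for a
    proof -
      have "snd a = x" "foc (fst a) x = fst a"
        using X \<open>a \<in> X\<close> Phi_at_iff by blast+
      moreover have "le (foc (fst a) x) (foc u x)"
        using u \<open>a \<in> X\<close> foc_mono by blast
      ultimately show ?thesis
        by (simp add: lab_le_iff)
    qed
    moreover have "(foc u x, x) \<in> Phi x"
      by (simp add: Phi_at_iff foc_foc)
    ultimately have "le (fst s) (foc u x)"
      using least lab_le_iff by fastforce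
    then show ?thesis
      using foc_le le_trans by blast
  qed
  then show ?thesis
    using S unfolding is_sup_in_def lab_le_iff by auto
qed

lemma is_sup_pair:
  assumes X: "X \<subseteq> Phi x" and S: "is_sup_in le UNIV (fst ` X) s"
  shows "is_sup_in lab_leq (Phi x) X (s, x)"
proof -
  have ub: "\<forall>a\<in>fst ` X. le a s" and least: "\<And>u. \<forall>a\<in>fst ` X. le a u \<Longrightarrow> le s u"
    using S unfolding is_sup_in_def by auto
  have "le a (foc s x)" if "a \<in> fst ` X" for a
  proof -
    have "foc a x = a"
      using X that Phi_at_iff by auto
    then show ?thesis
      using foc_mono[of a s x] ub that by simp
  qed
  then have "le s (foc s x)"
    using least by blast
  then have "foc s x = s"
    using foc_le le_antisym by blast
  show ?thesis
    unfolding is_sup_in_def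
  proof (intro conjI ballI impI)
    show "(s, x) \<in> Phi x"
      using \<open>foc s x = s\<close> by (simp add: Phi_at_iff)
    show "lab_leq a (s, x)" if "a \<in> X" for a
      using that X ub by (auto simp: Phi_at_iff lab_le_iff)
    show "lab_leq (s, x) u" if "u \<in> Phi x" and "\<forall>a\<in>X. lab_leq a u" for u
      using that least by (auto simp: Phi_at_iff lab_le_iff)
  qed
qed

lemma way_below_pair:
  assumes "way_below_in le UNIV \<chi> \<phi>"
  shows "way_below_in lab_leq (Phi x) (\<chi>, x) (\<phi>, x)"
  unfolding way_below_in_def
proof (intro allI impI)
  fix X s
  assume D: "directed_in lab_leq (Phi x) X" and S: "is_sup_in lab_leq (Phi x) X s"
    and "lab_leq (\<phi>, x) s"
  then have XP: "X \<subseteq> Phi x" and "le \<phi> (fst s)"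
    by (simp_all add: directed_in_def lab_le_iff)
  then obtain p where "p \<in> X" "le \<chi> (fst p)"
    using assms directed_fst[OF D] is_sup_fst[OF XP S] unfolding way_below_in_def by blast
  moreover have "snd p = x"
    using XP \<open>p \<in> X\<close> Phi_at_iff by blast
  ultimately show "\<exists>c\<in>X. lab_leq (\<chi>, x) c"
    by (auto simp: lab_le_iff)
qed

lemma way_below_imp_le:
  assumes "way_below_in lab_leq (Phi x) a b" and "b \<in> Phi x"
  shows "lab_leq a b"
proof -
  have refl: "lab_leq b b"
    by (simp add: lab_le_iff le_refl)
  then have "directed_in lab_leq (Phi x) {b}" and "is_sup_in lab_leq (Phi x) {b} b"
    using assms(2) by (simp_all add: directed_in_def is_sup_in_def)
  then show ?thesis
    using assms(1) refl unfolding way_below_in_def by blast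
qed

end

locale df_s_compact_algebra = df_information_algebra comb e foc
  for comb :: "'a \<Rightarrow> 'a \<Rightarrow> 'a" and e :: 'a and foc :: "'a \<Rightarrow> 'd::{lattice,order_top} \<Rightarrow> 'a" +
  assumes df_s_compact: "df_s_compact comb e foc (df_finite comb)"
begin

abbreviation Gamma :: "'d \<Rightarrow> ('a \<times> 'd) set" where
  "Gamma x \<equiv> {(\<psi>, x) | \<psi>. \<psi> \<in> df_finite comb \<and> \<psi> = foc \<psi> x}"

lemma comb_finite: "a \<in> df_finite comb \<Longrightarrow> b \<in> df_finite comb \<Longrightarrow> comb a b \<in> df_finite comb"
  using df_s_compact unfolding df_s_compact_def by blast

lemma neutral_finite: "e \<in> df_finite comb"
  using df_s_compact unfolding df_s_compact_def by blast

lemma directed_finite_has_sup: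
  "directed_in le (df_finite comb) X \<Longrightarrow> \<exists>s. is_sup_in le UNIV X s"
  using df_s_compact unfolding df_s_compact_def by blast

lemma foc_is_sup_finite:
  "is_sup_in le UNIV {\<psi> \<in> df_finite comb. \<psi> = foc \<psi> x \<and> way_below_in le UNIV \<psi> \<phi>} (foc \<phi> x)"
  using df_s_compact unfolding df_s_compact_def by blast

lemma finite_compact:
  "directed_in le (df_finite comb) X \<Longrightarrow> \<phi> \<in> df_finite comb \<Longrightarrow> is_sup_in le UNIV X s \<Longrightarrow>
    le \<phi> s \<Longrightarrow> \<exists>\<psi>\<in>X. le \<phi> \<psi>"
  using df_s_compact unfolding df_s_compact_def by blast

lemma foc_top_if_supported:
  assumes "foc a x = a"
  shows "foc a top = a"
  using foc_foc[of a x top] assms inf_absorb2[OF top_greatest, of x] by simp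

lemma Gamma_subset_Phi: "Gamma x \<subseteq> Phi x"
  by (clarsimp simp: Phi_at_iff)

lemma directed_Gamma_fst:
  assumes "directed_in lab_leq (Gamma x) X"
  shows "directed_in le (df_finite comb) (fst ` X)"
proof -
  have "fst ` X \<subseteq> df_finite comb"
    using assms by (auto simp: directed_in_def)
  then show ?thesis
    using directed_fst[OF assms] unfolding directed_in_def by blast
qed

lemma lab_neutral_Gamma: "lab_neutral e x \<in> Gamma x"
  by (simp add: lab_neutral_def neutral_finite foc_neutral)

lemma lab_comb_Gamma: "a \<in> Gamma x \<Longrightarrow> b \<in> Gamma x \<Longrightarrow> lab_comb comb a b \<in> Gamma x"
  by (clarsimp simp: lab_comb_def comb_finite foc_comb_supported)

lemma lab_convergency:
  assumes "directed_in lab_leq (Gamma x) X"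
  shows "\<exists>s. is_sup_in lab_leq (Phi x) X s"
proof -
  have "X \<subseteq> Phi x"
    using assms Gamma_subset_Phi unfolding directed_in_def by blast
  moreover obtain s where "is_sup_in le UNIV (fst ` X) s"
    using directed_finite_has_sup[OF directed_Gamma_fst[OF assms]] by blast
  ultimately show ?thesis
    using is_sup_pair by blast
qed

lemma lab_compactness:
  assumes D: "directed_in lab_leq (Gamma x) X" and "\<phi> \<in> Gamma x"
    and S: "is_sup_in lab_leq (Phi x) X s" and "lab_leq \<phi> s"
  shows "\<exists>\<psi>\<in>X. lab_leq \<phi> \<psi>"
proof -
  have XP: "X \<subseteq> Phi x"
    using D Gamma_subset_Phi unfolding directed_in_def by blast
  obtain \<chi> where \<phi>: "\<phi> = (\<chi>, x)" and "\<chi> \<in> df_finite comb"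
    using \<open>\<phi> \<in> Gamma x\<close> by blast
  moreover have "le \<chi> (fst s)"
    using \<open>lab_leq \<phi> s\<close> \<phi> by (simp add: lab_le_iff)
  ultimately obtain p where "p \<in> X" "le \<chi> (fst p)"
    using finite_compact[OF directed_Gamma_fst[OF D] _ is_sup_fst[OF XP S]] by blast
  moreover have "snd p = x"
    using XP \<open>p \<in> X\<close> Phi_at_iff by blast
  ultimately show ?thesis
    using \<phi> by (auto simp: lab_le_iff)
qed

lemma lab_strong_density:
  assumes "\<phi> \<in> Phi x"
  shows "is_sup_in lab_leq (Phi x)
    {lab_marg foc \<psi> x | \<psi>. \<psi> \<in> lab_carrier foc \<and> x \<le> lab_label \<psi> \<and> lab_marg foc \<psi> x \<in> Gamma x \<and>
       lab_comb comb (lab_marg foc \<psi> x) (lab_neutral e top) \<in> Gamma top \<and>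
       way_below_in lab_leq (Phi x) (lab_marg foc \<psi> x) \<phi>} \<phi>"
    (is "is_sup_in _ _ ?S _")
proof -
  obtain f where \<phi>: "\<phi> = (f, x)" and fx: "foc f x = f"
    using assms Phi_at_iff by (metis prod.collapse)
  define T where "T = {\<psi> \<in> df_finite comb. \<psi> = foc \<psi> x \<and> way_below_in le UNIV \<psi> f}"
  have T_sup: "is_sup_in le UNIV T f"
    using foc_is_sup_finite[of x f] fx by (simp add: T_def)
  have T_S: "(\<chi>, x) \<in> ?S" if "\<chi> \<in> T" for \<chi>
  proof -
    have \<chi>: "\<chi> \<in> df_finite comb" "foc \<chi> x = \<chi>" "way_below_in le UNIV \<chi> f"
      using that unfolding T_def by auto
    then have "lab_comb comb (\<chi>, x) (lab_neutral e top) \<in> Gamma top"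
      using foc_top_if_supported[of \<chi> x]
      by (simp add: lab_comb_def lab_neutral_def comb_commute[of \<chi> e] comb_neutral
          sup_absorb2[OF top_greatest])
    moreover have "way_below_in lab_leq (Phi x) (\<chi>, x) \<phi>"
      using way_below_pair[OF \<chi>(3)] \<phi> by simp
    ultimately show ?thesis
      using \<chi> by (intro CollectI exI[of _ "(\<chi>, x)"])
        (simp add: lab_marg_def lab_label_def lab_carrier_def)
  qed
  show ?thesis
    unfolding is_sup_in_def
  proof (intro conjI ballI impI)
    show "\<phi> \<in> Phi x" by (rule assms)
    show "lab_leq a \<phi>" if "a \<in> ?S" for a
      using that way_below_imp_le[OF _ assms] by blast
    show "lab_leq \<phi> u" if "u \<in> Phi x" and ub: "\<forall>a\<in>?S. lab_leq a u" for u
    proof -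
      have "\<forall>a\<in>T. le a (fst u)"
        using ub T_S by (fastforce simp: lab_le_iff)
      then have "le f (fst u)"
        using T_sup unfolding is_sup_in_def by blast
      then show ?thesis
        using \<open>u \<in> Phi x\<close> \<phi> by (auto simp: lab_le_iff Phi_at_iff)
    qed
  qed
qed

end

theorem theorem4p8:
  fixes comb :: "'a \<Rightarrow> 'a \<Rightarrow> 'a" and e :: 'a
    and foc :: "'a \<Rightarrow> 'd::{lattice,order_top} \<Rightarrow> 'a"
  assumes "df_info_algebra comb e foc"
    and "df_s_compact comb e foc (df_finite comb)"
  shows "lab_s_compact (lab_carrier foc) lab_label (lab_comb comb) (lab_marg foc)
           (lab_neutral e)
           (\<lambda>x. {(\<psi>, x) | \<psi>. \<psi> \<in> df_finite comb \<and> \<psi> = foc \<psi> x})"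
proof -
  interpret df_s_compact_algebra comb e foc
    using assms by unfold_locales
  show ?thesis
    unfolding lab_s_compact_def
  proof (intro conjI allI ballI impI)
    fix x X \<phi> s
    show "Gamma x \<subseteq> Phi x" by (rule Gamma_subset_Phi)
    show "lab_neutral e x \<in> Gamma x" by (rule lab_neutral_Gamma)
    show "lab_comb comb a b \<in> Gamma x" if "a \<in> Gamma x" "b \<in> Gamma x" for a b
      using that by (rule lab_comb_Gamma)
    show "\<exists>s. is_sup_in lab_leq (Phi x) X s" if "directed_in lab_leq (Gamma x) X"
      using that by (rule lab_convergency)
    show "\<exists>\<psi>\<in>X. lab_leq \<phi> \<psi>" if "directed_in lab_leq (Gamma x) X" "\<phi> \<in> Gamma x"
      "is_sup_in lab_leq (Phi x) X s" "lab_leq \<phi> s"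
      using that by (rule lab_compactness)
  qed (rule lab_strong_density)
qed

end
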